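(* Let $\Phi$ be a CNF formula in which every clause consists of exactly two (possibly equal) literals, and let $k$ be an integer. For each variable $x$ let $n(x)$ be the number of occurrences of $x$ in $\Phi$ (a clause $(l\vee l)$ with $l\in\{x,\neg x\}$ counts as two), numbered $1,\dots,n(x)$ arbitrarily. Build a graph $G$ with vertices $v(x,i)$ and $v(\neg x,i)$ for every variable $x$ and $1\le i\le n(x)$; for each $x$, join every vertex of $V(x)=\{v(x,i)\}_i$ to every vertex of $V(\neg x)=\{v(\neg x,j)\}_j$; and for each clause $C=(l_x\vee l_y)$, where $l_x$ is the $i$-th occurrence of variable $x$ and $l_y$ the $j$-th occurrence of variable $y$ (with $(x,i)\neq(y,j)$), add the edge $v(l_x,i)v(l_y,j)$. Then $G$ has a perfect matching, and there is a set of at most $k$ clauses of $\Phi$ whose deletion makes $\Phi$ satisfiable iff $G$ has a vertex cover of size at most $\mu(G)+k$.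
   Context: $\mu(G)$ denotes the size of a maximum matching of $G$. Here $v(l,i)$ for a literal $l\in\{x,\neg x\}$ denotes the vertex $v(x,i)$ or $v(\neg x,i)$ respectively. *)

theory Defs
  imports Main
begin

text \<open>Literals: (x, True) is the positive literal x, (x, False) is the negative literal not x.
A 2-CNF formula is a list of clauses, each clause a pair of (possibly equal) literals.\<close>

type_synonym 'v lit = "'v \<times> bool"
type_synonym 'v cnf2 = "('v lit \<times> 'v lit) list"

definition lit_at :: "'v cnf2 \<Rightarrow> nat \<Rightarrow> bool \<Rightarrow> 'v lit" where
  "lit_at \<Phi> c p = (if p then snd (\<Phi> ! c) else fst (\<Phi> ! c))"

definition occs :: "'v cnf2 \<Rightarrow> 'v \<Rightarrow> (nat \<times> bool) set" where
  "occs \<Phi> x = {(c, p). c < length \<Phi> \<and> fst (lit_at \<Phi> c p) = x}"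

definition nocc :: "'v cnf2 \<Rightarrow> 'v \<Rightarrow> nat" where
  "nocc \<Phi> x = card (occs \<Phi> x)"

definition valid_numbering :: "'v cnf2 \<Rightarrow> (nat \<Rightarrow> bool \<Rightarrow> nat) \<Rightarrow> bool" where
  "valid_numbering \<Phi> num =
     (\<forall>x. bij_betw (\<lambda>(c, p). num c p) (occs \<Phi> x) {1..nocc \<Phi> x})"

text \<open>Vertices v(l,i) are encoded as (x, b, i) where l = (x, b).\<close>
definition red_vertices :: "'v cnf2 \<Rightarrow> ('v \<times> bool \<times> nat) set" where
  "red_vertices \<Phi> = {(x, b, i). 1 \<le> i \<and> i \<le> nocc \<Phi> x}"

definition red_edges :: "'v cnf2 \<Rightarrow> (nat \<Rightarrow> bool \<Rightarrow> nat) \<Rightarrow> ('v \<times> bool \<times> nat) set set" where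
  "red_edges \<Phi> num =
     {{(x, True, i), (x, False, j)} | x i j. 1 \<le> i \<and> i \<le> nocc \<Phi> x \<and> 1 \<le> j \<and> j \<le> nocc \<Phi> x}
   \<union> {{(fst (lit_at \<Phi> c False), snd (lit_at \<Phi> c False), num c False),
       (fst (lit_at \<Phi> c True), snd (lit_at \<Phi> c True), num c True)} | c. c < length \<Phi>}"

definition is_matching :: "'a set set \<Rightarrow> 'a set set \<Rightarrow> bool" where
  "is_matching E M = (M \<subseteq> E \<and> (\<forall>e1\<in>M. \<forall>e2\<in>M. e1 \<noteq> e2 \<longrightarrow> e1 \<inter> e2 = {}))"

definition is_perfect_matching :: "'a set \<Rightarrow> 'a set set \<Rightarrow> 'a set set \<Rightarrow> bool" where
  "is_perfect_matching V E M = (is_matching E M \<and> \<Union>M = V)"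

definition matching_number :: "'a set set \<Rightarrow> nat" where
  "matching_number E = Max (card ` {M. is_matching E M})"

definition is_vertex_cover :: "'a set \<Rightarrow> 'a set set \<Rightarrow> 'a set \<Rightarrow> bool" where
  "is_vertex_cover V E C = (C \<subseteq> V \<and> (\<forall>e\<in>E. e \<inter> C \<noteq> {}))"

definition lit_true :: "('v \<Rightarrow> bool) \<Rightarrow> 'v lit \<Rightarrow> bool" where
  "lit_true \<sigma> l = (\<sigma> (fst l) = snd l)"

definition clause_sat :: "('v \<Rightarrow> bool) \<Rightarrow> 'v lit \<times> 'v lit \<Rightarrow> bool" where
  "clause_sat \<sigma> C = (lit_true \<sigma> (fst C) \<or> lit_true \<sigma> (snd C))"

definition sat_after_deletion :: "'v cnf2 \<Rightarrow> nat set \<Rightarrow> bool" where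
  "sat_after_deletion \<Phi> D =
     (\<exists>\<sigma>. \<forall>c < length \<Phi>. c \<notin> D \<longrightarrow> clause_sat \<sigma> (\<Phi> ! c))"

end

theory Submission
  imports Defs
begin

(* Every occurrence of a variable in the formula sits at a position (c, p): clause c, side p.
   The vertices v(x, i), v(not x, i) of G are exactly the images of (position, sign) pairs under a
   bijection, so G has 2 * #positions vertices, and the pairs {v(x,i), v(not x,i)} form a perfect
   matching.  A general counting fact about graphs whose edges are 2-sets then gives
   mu(G) = #positions.

   Forward direction: an assignment sigma satisfying all clauses outside D yields the cover
   "for every position, the vertex of the sign sigma(x)" plus one literal vertex per deleted clause;
   its size is at most mu(G) + |D|.
   Backward direction: from a cover C read off sigma(x) = "all of V(x) lies in C"; then C contains
   the sigma-vertex of every position and, disjointly, a vertex of the wrong sign for every clause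
   violated by sigma, so deleting the violated clauses costs at most |C| - mu(G). *)

section \<open>Matchings in graphs with two-element edges\<close>

lemma matching_finite_and_card_Union:
  assumes finV: "finite V" and edges: "\<And>e. e \<in> E \<Longrightarrow> e \<subseteq> V \<and> card e = 2"
    and M: "is_matching E M"
  shows "finite M" and "card (\<Union>M) = 2 * card M"
proof -
  have sub: "M \<subseteq> Pow V" using M edges unfolding is_matching_def by blast
  then show finM: "finite M" using finV finite_subset by blast
  have "card (\<Union>M) = sum card M"
  proof (rule card_Union_disjoint)
    show "pairwise disjnt M" using M by (auto simp: is_matching_def pairwise_def disjnt_def)
    show "\<And>A. A \<in> M \<Longrightarrow> finite A" using sub finV finite_subset by blast
  qed
  also have "\<dots> = sum (\<lambda>_. 2) M" using M edges unfolding is_matching_def by (intro sum.cong) auto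
  finally show "card (\<Union>M) = 2 * card M" by simp
qed

lemma matching_number_perfect:
  assumes finV: "finite V" and edges: "\<And>e. e \<in> E \<Longrightarrow> e \<subseteq> V \<and> card e = 2"
    and PM: "is_perfect_matching V E M"
  shows "2 * matching_number E = card V"
proof -
  have M: "is_matching E M" and UM: "\<Union>M = V" using PM by (auto simp: is_perfect_matching_def)
  have cardV: "card V = 2 * card M" using matching_finite_and_card_Union[OF finV edges M] UM by simp
  have bound: "card M' \<le> card M" if M': "is_matching E M'" for M'
  proof -
    have "\<Union>M' \<subseteq> V" using M' edges unfolding is_matching_def by blast
    then have "card (\<Union>M') \<le> card V" using finV by (rule card_mono[rotated])
    then show ?thesis using matching_finite_and_card_Union[OF finV edges M'] cardV by simp
  qed
  have "matching_number E = card M"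
    unfolding matching_number_def
  proof (rule Max_eqI)
    show "finite (card ` {M. is_matching E M})"
      by (rule finite_subset[of _ "{..card M}"]) (auto dest: bound)
  qed (use M bound in auto)
  then show ?thesis using cardV by simp
qed

definition positions :: "'v cnf2 \<Rightarrow> (nat \<times> bool) set" where
  "positions \<Phi> = {..<length \<Phi>} \<times> UNIV"

definition var_at :: "'v cnf2 \<Rightarrow> nat \<times> bool \<Rightarrow> 'v" where
  "var_at \<Phi> q = fst (lit_at \<Phi> (fst q) (snd q))"

definition occ_vertex ::
    "'v cnf2 \<Rightarrow> (nat \<Rightarrow> bool \<Rightarrow> nat) \<Rightarrow> nat \<times> bool \<Rightarrow> bool \<Rightarrow> 'v \<times> bool \<times> nat" where
  "occ_vertex \<Phi> num q b = (var_at \<Phi> q, b, num (fst q) (snd q))"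

definition lit_vertex ::
    "'v cnf2 \<Rightarrow> (nat \<Rightarrow> bool \<Rightarrow> nat) \<Rightarrow> nat \<times> bool \<Rightarrow> 'v \<times> bool \<times> nat" where
  "lit_vertex \<Phi> num q = occ_vertex \<Phi> num q (snd (lit_at \<Phi> (fst q) (snd q)))"

definition clause_edge ::
    "'v cnf2 \<Rightarrow> (nat \<Rightarrow> bool \<Rightarrow> nat) \<Rightarrow> nat \<Rightarrow> ('v \<times> bool \<times> nat) set" where
  "clause_edge \<Phi> num c = {lit_vertex \<Phi> num (c, False), lit_vertex \<Phi> num (c, True)}"

definition violated :: "'v cnf2 \<Rightarrow> ('v \<Rightarrow> bool) \<Rightarrow> nat set" where
  "violated \<Phi> \<sigma> = {c. c < length \<Phi> \<and> \<not> clause_sat \<sigma> (\<Phi> ! c)}"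

lemma occs_eq_positions: "occs \<Phi> x = {q \<in> positions \<Phi>. var_at \<Phi> q = x}"
  by (auto simp: occs_def positions_def var_at_def)

lemma red_edges_cases:
  assumes "e \<in> red_edges \<Phi> num"
  obtains (complementary) x i j where "e = {(x, True, i), (x, False, j)}"
      "i \<in> {1..nocc \<Phi> x}" "j \<in> {1..nocc \<Phi> x}"
    | (clause) c where "c < length \<Phi>" "e = clause_edge \<Phi> num c"
  using assms unfolding red_edges_def clause_edge_def lit_vertex_def occ_vertex_def var_at_def
  by auto

lemma clause_edge_in_red_edges: "c < length \<Phi> \<Longrightarrow> clause_edge \<Phi> num c \<in> red_edges \<Phi> num"
  unfolding red_edges_def clause_edge_def lit_vertex_def occ_vertex_def var_at_def by auto

lemma clause_sat_iff_lit_vertex: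
  "clause_sat \<sigma> (\<Phi> ! c) \<longleftrightarrow>
     (\<exists>p. lit_vertex \<Phi> num (c, p) = occ_vertex \<Phi> num (c, p) (\<sigma> (var_at \<Phi> (c, p))))"
proof -
  have "lit_vertex \<Phi> num (c, p) = occ_vertex \<Phi> num (c, p) (\<sigma> (var_at \<Phi> (c, p)))
        \<longleftrightarrow> lit_true \<sigma> (lit_at \<Phi> c p)" for p
    by (auto simp: lit_vertex_def occ_vertex_def var_at_def lit_true_def)
  moreover have "clause_sat \<sigma> (\<Phi> ! c) \<longleftrightarrow> (\<exists>p. lit_true \<sigma> (lit_at \<Phi> c p))"
    by (metis (full_types) clause_sat_def lit_at_def)
  ultimately show ?thesis by simp
qed

context
  fixes \<Phi> :: "'v cnf2" and num :: "nat \<Rightarrow> bool \<Rightarrow> nat"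
  assumes numbering: "valid_numbering \<Phi> num"
begin

lemma num_in_range:
  assumes "q \<in> positions \<Phi>"
  shows "num (fst q) (snd q) \<in> {1..nocc \<Phi> (var_at \<Phi> q)}"
proof -
  have "q \<in> occs \<Phi> (var_at \<Phi> q)" using assms by (simp add: occs_eq_positions)
  then show ?thesis using numbering unfolding valid_numbering_def bij_betw_def by fastforce
qed

lemma num_onto:
  assumes "i \<in> {1..nocc \<Phi> x}"
  obtains q where "q \<in> positions \<Phi>" "var_at \<Phi> q = x" "num (fst q) (snd q) = i"
proof -
  have "i \<in> (\<lambda>(c, p). num c p) ` occs \<Phi> x"
    using assms numbering unfolding valid_numbering_def bij_betw_def by metis
  then show ?thesis using that by (auto simp: occs_eq_positions)
qed

lemma occ_vertex_eq_iff:
  assumes "q \<in> positions \<Phi>" "q' \<in> positions \<Phi>"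
  shows "occ_vertex \<Phi> num q b = occ_vertex \<Phi> num q' b' \<longleftrightarrow> q = q' \<and> b = b'"
proof
  assume eq: "occ_vertex \<Phi> num q b = occ_vertex \<Phi> num q' b'"
  then have "q \<in> occs \<Phi> (var_at \<Phi> q)" "q' \<in> occs \<Phi> (var_at \<Phi> q)"
    using assms by (auto simp: occs_eq_positions occ_vertex_def)
  moreover have "num (fst q) (snd q) = num (fst q') (snd q')" using eq by (simp add: occ_vertex_def)
  ultimately have "q = q'"
    using numbering unfolding valid_numbering_def bij_betw_def inj_on_def by (metis case_prod_beta)
  then show "q = q' \<and> b = b'" using eq by (simp add: occ_vertex_def)
qed simp

lemma red_vertices_eq: "red_vertices \<Phi> = (\<lambda>(q, b). occ_vertex \<Phi> num q b) ` (positions \<Phi> \<times> UNIV)"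
proof
  show "(\<lambda>(q, b). occ_vertex \<Phi> num q b) ` (positions \<Phi> \<times> UNIV) \<subseteq> red_vertices \<Phi>"
    using num_in_range by (auto simp: red_vertices_def occ_vertex_def)
  show "red_vertices \<Phi> \<subseteq> (\<lambda>(q, b). occ_vertex \<Phi> num q b) ` (positions \<Phi> \<times> UNIV)"
  proof
    fix v assume "v \<in> red_vertices \<Phi>"
    then obtain x b i where v: "v = (x, b, i)" and i: "i \<in> {1..nocc \<Phi> x}"
      by (auto simp: red_vertices_def)
    obtain q where "q \<in> positions \<Phi>" "var_at \<Phi> q = x" "num (fst q) (snd q) = i"
      using num_onto[OF i] .
    then show "v \<in> (\<lambda>(q, b). occ_vertex \<Phi> num q b) ` (positions \<Phi> \<times> UNIV)"
      using v by (force simp: occ_vertex_def)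
  qed
qed

lemma occ_vertex_in_red_vertices: "q \<in> positions \<Phi> \<Longrightarrow> occ_vertex \<Phi> num q b \<in> red_vertices \<Phi>"
  using red_vertices_eq by auto

lemma finite_red_vertices: "finite (red_vertices \<Phi>)"
  by (simp add: red_vertices_eq positions_def)

lemma card_red_vertices: "card (red_vertices \<Phi>) = 2 * card (positions \<Phi>)"
proof -
  have "inj_on (\<lambda>(q, b). occ_vertex \<Phi> num q b) (positions \<Phi> \<times> UNIV)"
    by (auto intro!: inj_onI simp: occ_vertex_eq_iff)
  then have "card (red_vertices \<Phi>) = card (positions \<Phi> \<times> (UNIV :: bool set))"
    by (simp add: red_vertices_eq card_image)
  then show ?thesis by (simp add: card_cartesian_product)
qed

lemma red_edges_two_sets:
  assumes "e \<in> red_edges \<Phi> num"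
  shows "e \<subseteq> red_vertices \<Phi> \<and> card e = 2"
  using assms
proof (cases rule: red_edges_cases)
  case (clause c)
  then have "(c, p) \<in> positions \<Phi>" for p by (simp add: positions_def)
  then show ?thesis
    using clause by (auto simp: clause_edge_def lit_vertex_def occ_vertex_eq_iff occ_vertex_in_red_vertices)
qed (auto simp: red_vertices_def)

section \<open>The perfect matching and the matching number\<close>

definition occurrence_matching :: "('v \<times> bool \<times> nat) set set" where
  "occurrence_matching = (\<lambda>q. {occ_vertex \<Phi> num q True, occ_vertex \<Phi> num q False}) ` positions \<Phi>"

lemma occurrence_matching_perfect:
  "is_perfect_matching (red_vertices \<Phi>) (red_edges \<Phi> num) occurrence_matching"
  unfolding is_perfect_matching_def is_matching_def
proof (intro conjI)
  show "occurrence_matching \<subseteq> red_edges \<Phi> num"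
  proof
    fix e assume "e \<in> occurrence_matching"
    then obtain q where q: "q \<in> positions \<Phi>"
      and e: "e = {occ_vertex \<Phi> num q True, occ_vertex \<Phi> num q False}"
      by (auto simp: occurrence_matching_def)
    show "e \<in> red_edges \<Phi> num"
      using num_in_range[OF q] unfolding e red_edges_def occ_vertex_def by auto
  qed
  show "\<forall>e1\<in>occurrence_matching. \<forall>e2\<in>occurrence_matching. e1 \<noteq> e2 \<longrightarrow> e1 \<inter> e2 = {}"
  proof (intro ballI impI)
    fix e1 e2 assume "e1 \<in> occurrence_matching" "e2 \<in> occurrence_matching" "e1 \<noteq> e2"
    then obtain q q' where q: "q \<in> positions \<Phi>" "q' \<in> positions \<Phi>" "q \<noteq> q'"
      and e: "e1 = {occ_vertex \<Phi> num q True, occ_vertex \<Phi> num q False}"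
             "e2 = {occ_vertex \<Phi> num q' True, occ_vertex \<Phi> num q' False}"
      unfolding occurrence_matching_def by auto
    then show "e1 \<inter> e2 = {}" by (auto simp: occ_vertex_eq_iff)
  qed
  have "\<Union>occurrence_matching = (\<lambda>(q, b). occ_vertex \<Phi> num q b) ` (positions \<Phi> \<times> UNIV)"
    unfolding occurrence_matching_def by (auto simp: image_iff) (metis (full_types))+
  then show "\<Union>occurrence_matching = red_vertices \<Phi>" by (simp add: red_vertices_eq)
qed

theorem matching_number_red_edges: "matching_number (red_edges \<Phi> num) = card (positions \<Phi>)"
  using matching_number_perfect[OF finite_red_vertices red_edges_two_sets occurrence_matching_perfect]
  by (simp add: card_red_vertices)

section \<open>From an assignment to a vertex cover\<close>

definition assignment_cover :: "('v \<Rightarrow> bool) \<Rightarrow> nat set \<Rightarrow> ('v \<times> bool \<times> nat) set" where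
  "assignment_cover \<sigma> D =
     (\<lambda>q. occ_vertex \<Phi> num q (\<sigma> (var_at \<Phi> q))) ` positions \<Phi> \<union> (\<lambda>c. lit_vertex \<Phi> num (c, False)) ` D"

lemma assignment_cover_card:
  assumes "D \<subseteq> {..<length \<Phi>}"
  shows "card (assignment_cover \<sigma> D) \<le> card (positions \<Phi>) + card D"
proof -
  have "finite D" using assms finite_subset by blast
  then show ?thesis
    unfolding assignment_cover_def
    by (intro card_Un_le[THEN order_trans] add_mono card_image_le) (auto simp: positions_def)
qed

lemma assignment_cover_is_cover:
  assumes D: "D \<subseteq> {..<length \<Phi>}" and sat: "violated \<Phi> \<sigma> \<subseteq> D"
  shows "is_vertex_cover (red_vertices \<Phi>) (red_edges \<Phi> num) (assignment_cover \<sigma> D)"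
  unfolding is_vertex_cover_def
proof (intro conjI ballI)
  have "(c, False) \<in> positions \<Phi>" if "c \<in> D" for c using that D by (auto simp: positions_def)
  then show "assignment_cover \<sigma> D \<subseteq> red_vertices \<Phi>"
    by (auto simp: assignment_cover_def lit_vertex_def occ_vertex_in_red_vertices)
next
  fix e assume "e \<in> red_edges \<Phi> num"
  then show "e \<inter> assignment_cover \<sigma> D \<noteq> {}"
  proof (cases rule: red_edges_cases)
    case (complementary x i j)
    text \<open>The endpoint of sign sigma(x) is the sigma-vertex of the occurrence with that number.\<close>
    obtain q where q: "q \<in> positions \<Phi>" "var_at \<Phi> q = x"
      "num (fst q) (snd q) = (if \<sigma> x then i else j)"
      using num_onto complementary by (metis (full_types))
    then have "occ_vertex \<Phi> num q (\<sigma> x) \<in> e \<inter> assignment_cover \<sigma> D"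
      using complementary by (auto simp: assignment_cover_def occ_vertex_def)
    then show ?thesis by blast
  next
    case (clause c)
    show ?thesis
    proof (cases "c \<in> D")
      case True
      then show ?thesis using clause by (auto simp: assignment_cover_def clause_edge_def)
    next
      case False
      then have "clause_sat \<sigma> (\<Phi> ! c)" using sat clause by (auto simp: violated_def)
      then obtain p where "lit_vertex \<Phi> num (c, p) = occ_vertex \<Phi> num (c, p) (\<sigma> (var_at \<Phi> (c, p)))"
        using clause_sat_iff_lit_vertex by blast
      moreover have "(c, p) \<in> positions \<Phi>" using clause by (simp add: positions_def)
      ultimately have "lit_vertex \<Phi> num (c, p) \<in> e \<inter> assignment_cover \<sigma> D"
        using clause by (cases p) (auto simp: assignment_cover_def clause_edge_def)
      then show ?thesis by blast
    qed
  qed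
qed

section \<open>From a vertex cover to an assignment\<close>

definition cover_assignment :: "('v \<times> bool \<times> nat) set \<Rightarrow> 'v \<Rightarrow> bool" where
  "cover_assignment C x = (\<forall>i\<in>{1..nocc \<Phi> x}. (x, True, i) \<in> C)"

text \<open>A cover contains the vertex of sign sigma(x) of every occurrence: if some vertex of V(x)
  is missing, the complete bipartite edges force all of V(not x) into C.\<close>
lemma cover_contains_assignment_vertices:
  assumes C: "is_vertex_cover (red_vertices \<Phi>) (red_edges \<Phi> num) C" and q: "q \<in> positions \<Phi>"
  shows "occ_vertex \<Phi> num q (cover_assignment C (var_at \<Phi> q)) \<in> C"
proof -
  define x where "x = var_at \<Phi> q"
  have i: "num (fst q) (snd q) \<in> {1..nocc \<Phi> x}" using num_in_range[OF q] by (simp add: x_def)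
  show ?thesis
  proof (cases "cover_assignment C x")
    case True
    then show ?thesis using i by (simp add: cover_assignment_def occ_vertex_def x_def)
  next
    case False
    then obtain i0 where i0: "i0 \<in> {1..nocc \<Phi> x}" "(x, True, i0) \<notin> C"
      by (auto simp: cover_assignment_def)
    have "{(x, True, i0), (x, False, num (fst q) (snd q))} \<in> red_edges \<Phi> num"
      using i0 i unfolding red_edges_def by auto
    then have "(x, False, num (fst q) (snd q)) \<in> C"
      using C i0 by (auto simp: is_vertex_cover_def)
    then show ?thesis using False by (simp add: occ_vertex_def x_def)
  qed
qed

text \<open>The edge of a clause violated by sigma joins two vertices of the wrong sign, so the cover
  contains a wrong-sign vertex of that clause.\<close>
lemma cover_meets_violated_clause:
  assumes C: "is_vertex_cover (red_vertices \<Phi>) (red_edges \<Phi> num) C"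
    and c: "c \<in> violated \<Phi> \<sigma>"
  shows "\<exists>p. occ_vertex \<Phi> num (c, p) (\<not> \<sigma> (var_at \<Phi> (c, p))) \<in> C"
proof -
  have "c < length \<Phi>" and "\<not> clause_sat \<sigma> (\<Phi> ! c)" using c by (auto simp: violated_def)
  then have wrong: "lit_vertex \<Phi> num (c, p) = occ_vertex \<Phi> num (c, p) (\<not> \<sigma> (var_at \<Phi> (c, p)))" for p
    using clause_sat_iff_lit_vertex[of \<sigma> \<Phi> c num]
    by (auto simp: lit_vertex_def occ_vertex_def)
  have "clause_edge \<Phi> num c \<inter> C \<noteq> {}"
    using C clause_edge_in_red_edges[OF \<open>c < length \<Phi>\<close>] by (auto simp: is_vertex_cover_def)
  then show ?thesis unfolding clause_edge_def wrong by blast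
qed

lemma cover_card_lower_bound:
  assumes C: "is_vertex_cover (red_vertices \<Phi>) (red_edges \<Phi> num) C"
  shows "card (positions \<Phi>) + card (violated \<Phi> (cover_assignment C)) \<le> card C"
proof -
  define \<sigma> where "\<sigma> = cover_assignment C"
  define D where "D = violated \<Phi> \<sigma>"
  have "\<forall>c\<in>D. \<exists>p. occ_vertex \<Phi> num (c, p) (\<not> \<sigma> (var_at \<Phi> (c, p))) \<in> C"
    using cover_meets_violated_clause[OF C] by (simp add: D_def)
  then obtain side where side: "\<forall>c\<in>D. occ_vertex \<Phi> num (c, side c) (\<not> \<sigma> (var_at \<Phi> (c, side c))) \<in> C"
    by (metis bchoice)
  define A where "A = (\<lambda>q. occ_vertex \<Phi> num q (\<sigma> (var_at \<Phi> q))) ` positions \<Phi>"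
  define B where "B = (\<lambda>c. occ_vertex \<Phi> num (c, side c) (\<not> \<sigma> (var_at \<Phi> (c, side c)))) ` D"
  have pos: "(c, side c) \<in> positions \<Phi>" if "c \<in> D" for c
    using that by (auto simp: D_def violated_def positions_def)
  have "card A = card (positions \<Phi>)"
    unfolding A_def by (rule card_image) (auto intro!: inj_onI simp: occ_vertex_eq_iff)
  moreover have "card B = card D"
    unfolding B_def by (rule card_image) (auto intro!: inj_onI simp: occ_vertex_eq_iff pos)
  moreover have "A \<inter> B = {}"
    by (auto simp: A_def B_def occ_vertex_eq_iff pos)
  moreover have "finite A" "finite B"
    by (auto simp: A_def B_def D_def violated_def positions_def)
  moreover have "A \<union> B \<subseteq> C"
    using side cover_contains_assignment_vertices[OF C] by (auto simp: A_def B_def \<sigma>_def)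
  moreover have "finite C"
    using C finite_red_vertices finite_subset by (auto simp: is_vertex_cover_def)
  ultimately have "card (positions \<Phi>) + card D \<le> card C"
    by (metis card_Un_disjoint card_mono)
  then show ?thesis by (simp add: D_def \<sigma>_def)
qed

end

theorem mainTheorem10:
  fixes \<Phi> :: "'v cnf2" and k :: int and num :: "nat \<Rightarrow> bool \<Rightarrow> nat"
  assumes "valid_numbering \<Phi> num"
  shows "(\<exists>M. is_perfect_matching (red_vertices \<Phi>) (red_edges \<Phi> num) M)
    \<and> ((\<exists>D. D \<subseteq> {..<length \<Phi>} \<and> int (card D) \<le> k \<and> sat_after_deletion \<Phi> D)
       \<longleftrightarrow> (\<exists>C. is_vertex_cover (red_vertices \<Phi>) (red_edges \<Phi> num) C
              \<and> int (card C) \<le> int (matching_number (red_edges \<Phi> num)) + k))"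
proof (intro conjI iffI)
  show "\<exists>M. is_perfect_matching (red_vertices \<Phi>) (red_edges \<Phi> num) M"
    using occurrence_matching_perfect[OF assms] by blast
next
  assume "\<exists>D. D \<subseteq> {..<length \<Phi>} \<and> int (card D) \<le> k \<and> sat_after_deletion \<Phi> D"
  then obtain D \<sigma> where D: "D \<subseteq> {..<length \<Phi>}" "int (card D) \<le> k" and "violated \<Phi> \<sigma> \<subseteq> D"
    by (auto simp: sat_after_deletion_def violated_def)
  then show "\<exists>C. is_vertex_cover (red_vertices \<Phi>) (red_edges \<Phi> num) C
              \<and> int (card C) \<le> int (matching_number (red_edges \<Phi> num)) + k"
    using assignment_cover_is_cover[OF assms] assignment_cover_card[OF assms D(1), of \<sigma>]
      matching_number_red_edges[OF assms]
    by (intro exI[of _ "assignment_cover \<Phi> num \<sigma> D"]) auto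
next
  assume "\<exists>C. is_vertex_cover (red_vertices \<Phi>) (red_edges \<Phi> num) C
              \<and> int (card C) \<le> int (matching_number (red_edges \<Phi> num)) + k"
  then obtain C where C: "is_vertex_cover (red_vertices \<Phi>) (red_edges \<Phi> num) C"
    and size: "int (card C) \<le> int (matching_number (red_edges \<Phi> num)) + k" by blast
  define \<sigma> where "\<sigma> = cover_assignment \<Phi> C"
  have "sat_after_deletion \<Phi> (violated \<Phi> \<sigma>)" "violated \<Phi> \<sigma> \<subseteq> {..<length \<Phi>}"
    by (auto simp: sat_after_deletion_def violated_def)
  moreover have "int (card (violated \<Phi> \<sigma>)) \<le> k"
    using cover_card_lower_bound[OF assms C] size matching_number_red_edges[OF assms]
    by (simp add: \<sigma>_def)
  ultimately show "\<exists>D. D \<subseteq> {..<length \<Phi>} \<and> int (card D) \<le> k \<and> sat_after_deletion \<Phi> D"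
    by blast
qed

end
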